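(* Let $(\Omega,\mathcal F)$ be a measurable space, $\mathcal I\in\Sigma$, and $A_n\in\mathcal F$, $n\in\mathbb N$. (1) If $A_1\subset A_2\subset\cdots$, set $\mathcal I_{\mathcal A}=\{I\cap A_1\mid I\in\mathcal I\}\cup\{(I\cup A_n)\cap A_{n+1}\mid I\in\mathcal I,\ n\in\mathbb N\}\cup\{I\cup\bigcup_{n}A_n\mid I\in\mathcal I\}$. Then $A_n\in\mathcal I_{\mathcal A}$ for all $n$, $\bigcup_n A_n\in\mathcal I_{\mathcal A}$, and $\mathcal I_{\mathcal A}\in\Sigma$. (2) If $A_1\supset A_2\supset\cdots$, set $\mathcal I_{\mathcal A}=\{I\cap\bigcap_n A_n\mid I\in\mathcal I\}\cup\{(I\cup A_{n+1})\cap A_n\mid I\in\mathcal I,\ n\in\mathbb N\}\cup\{I\cup A_1\mid I\in\mathcal I\}$. Then $A_n\in\mathcal I_{\mathcal A}$ for all $n$, $\bigcap_n A_n\in\mathcal I_{\mathcal A}$, and $\mathcal I_{\mathcal A}\in\Sigma$.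
   Context: $\Sigma$ denotes the set of all classes $\mathcal I\subset\mathcal F$ that are chains (totally ordered by inclusion), contain $\emptyset$ and $\Omega$, and satisfy $\sigma[\mathcal I]=\mathcal F$. *)

theory Defs
  imports "HOL-Analysis.Analysis"
begin

text \<open>The class Sigma of a measurable space M: chains of measurable sets containing
  the empty set and the whole space and generating the sigma-algebra.\<close>
definition chain_generators :: "'a measure \<Rightarrow> 'a set set set" where
  "chain_generators M =
     {\<I>. \<I> \<subseteq> sets M \<and>
          (\<forall>I\<in>\<I>. \<forall>J\<in>\<I>. I \<subseteq> J \<or> J \<subseteq> I) \<and>
          {} \<in> \<I> \<and> space M \<in> \<I> \<and>
          sigma_sets (space M) \<I> = sets M}"

end

theory Submission
  imports Defs
begin

(*
  Both families arise by splicing copies of the chain \<I> into the slabs D - C of a countable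
  stack of measurable pairs C \<subseteq> D, stacked so that for two different pairs one D lies below
  the other C: I \<in> \<I> is placed in the slab as (I \<union> C) \<inter> D.  Copies in different slabs
  are then nested and copies in one slab inherit the order of \<I>, so the result is a chain; it
  contains every C (take I = {}) and every D (take I = \<Omega>).  If the slabs cover \<Omega>, each
  I is the countable union of the pieces (I \<union> C) \<inter> D - C, so \<I>, and hence all of
  \<F>, lies in the generated sigma-algebra.  For increasing A the stack is
  ({}, A 0), (A n, A (n+1)), (\<Union>A, \<Omega>); for decreasing A it is
  ({}, \<Inter>A), (A (n+1), A n), (A 0, \<Omega>).
*)

definition stacked_slabs :: "('a set \<times> 'a set) set \<Rightarrow> bool" where
  "stacked_slabs P \<longleftrightarrow>
     (\<forall>(C, D)\<in>P. C \<subseteq> D) \<and>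
     (\<forall>p\<in>P. \<forall>q\<in>P. p = q \<or> snd p \<subseteq> fst q \<or> snd q \<subseteq> fst p)"

definition splice_chain :: "'a set set \<Rightarrow> ('a set \<times> 'a set) set \<Rightarrow> 'a set set" where
  "splice_chain \<I> P = {(I \<union> C) \<inter> D | I C D. I \<in> \<I> \<and> (C, D) \<in> P}"

lemma splice_chain_endpoints:
  assumes "{} \<in> \<I>" and "\<Omega> \<in> \<I>" and "(C, D) \<in> P" and "C \<subseteq> D" and "D \<subseteq> \<Omega>"
  shows "C \<in> splice_chain \<I> P" and "D \<in> splice_chain \<I> P"
proof -
  have "C = ({} \<union> C) \<inter> D" and "D = (\<Omega> \<union> C) \<inter> D"
    using assms(4,5) by auto
  then show "C \<in> splice_chain \<I> P" and "D \<in> splice_chain \<I> P"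
    unfolding splice_chain_def using assms(1-3) by blast+
qed

lemma splice_chain_chain:
  assumes chain: "\<And>I J. I \<in> \<I> \<Longrightarrow> J \<in> \<I> \<Longrightarrow> I \<subseteq> J \<or> J \<subseteq> I"
    and "stacked_slabs P"
    and "X \<in> splice_chain \<I> P" and "Y \<in> splice_chain \<I> P"
  shows "X \<subseteq> Y \<or> Y \<subseteq> X"
proof -
  obtain I C D J C' D' where X: "X = (I \<union> C) \<inter> D" "I \<in> \<I>" "(C, D) \<in> P"
    and Y: "Y = (J \<union> C') \<inter> D'" "J \<in> \<I>" "(C', D') \<in> P"
    using assms(3,4) unfolding splice_chain_def by blast
  have slab: "\<And>C D. (C, D) \<in> P \<Longrightarrow> C \<subseteq> D"
    using \<open>stacked_slabs P\<close> unfolding stacked_slabs_def by blast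
  from X(3) Y(3) \<open>stacked_slabs P\<close>
  consider "C = C'" "D = D'" | "D \<subseteq> C'" | "D' \<subseteq> C"
    unfolding stacked_slabs_def by fastforce
  then show ?thesis
  proof cases
    case 1
    then show ?thesis using X Y chain[OF X(2) Y(2)] by blast
  next
    case 2
    then show ?thesis using X Y slab[OF Y(3)] by blast
  next
    case 3
    then show ?thesis using X Y slab[OF X(3)] by blast
  qed
qed

lemma splice_chain_sigma_sets:
  assumes "countable P" and "{} \<in> \<I>" and "I \<in> \<I>" and "I \<subseteq> \<Omega>"
    and slab: "\<And>C D. (C, D) \<in> P \<Longrightarrow> C \<subseteq> D \<and> D \<subseteq> \<Omega>"
    and cover: "\<Omega> \<subseteq> (\<Union>(C, D)\<in>P. D - C)"
  shows "I \<in> sigma_sets \<Omega> (splice_chain \<I> P)"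
proof -
  have "splice_chain \<I> P \<subseteq> Pow \<Omega>"
    unfolding splice_chain_def using slab by blast
  then interpret S: sigma_algebra \<Omega> "sigma_sets \<Omega> (splice_chain \<I> P)"
    by (rule sigma_algebra_sigma_sets)
  have piece: "(I \<union> C) \<inter> D - C \<in> sigma_sets \<Omega> (splice_chain \<I> P)" if "(C, D) \<in> P" for C D
  proof -
    have "(I \<union> C) \<inter> D \<in> splice_chain \<I> P" and "C \<in> splice_chain \<I> P"
      using that assms(2,3) slab[OF that] unfolding splice_chain_def by blast+
    then show ?thesis by blast
  qed
  have "I = (\<Union>(C, D)\<in>P. (I \<union> C) \<inter> D - C)"
    using \<open>I \<subseteq> \<Omega>\<close> cover by blast
  also have "\<dots> \<in> sigma_sets \<Omega> (splice_chain \<I> P)"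
    using piece \<open>countable P\<close> by (intro S.countable_UN') auto
  finally show ?thesis .
qed

lemma splice_chain_in_chain_generators:
  assumes \<I>: "\<I> \<in> chain_generators M"
    and "countable P" and "stacked_slabs P"
    and P_sets: "P \<subseteq> sets M \<times> sets M"
    and bottom: "({}, D\<^sub>0) \<in> P" and top: "(C\<^sub>1, space M) \<in> P"
    and cover: "space M \<subseteq> (\<Union>(C, D)\<in>P. D - C)"
  shows "splice_chain \<I> P \<in> chain_generators M"
    and "(C, D) \<in> P \<Longrightarrow> C \<in> splice_chain \<I> P \<and> D \<in> splice_chain \<I> P"
proof -
  have \<I>_sets: "\<I> \<subseteq> sets M"
    and chain: "\<And>I J. I \<in> \<I> \<Longrightarrow> J \<in> \<I> \<Longrightarrow> I \<subseteq> J \<or> J \<subseteq> I"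
    and "{} \<in> \<I>" and "space M \<in> \<I>" and \<I>_generates: "sigma_sets (space M) \<I> = sets M"
    using \<I> unfolding chain_generators_def by auto
  have slab: "C \<subseteq> D \<and> D \<subseteq> space M" if "(C, D) \<in> P" for C D
    using that \<open>stacked_slabs P\<close> P_sets sets.sets_into_space
    unfolding stacked_slabs_def by blast
  have endpoints: "C \<in> splice_chain \<I> P \<and> D \<in> splice_chain \<I> P" if "(C, D) \<in> P" for C D
    using splice_chain_endpoints[OF \<open>{} \<in> \<I>\<close> \<open>space M \<in> \<I>\<close> that] slab[OF that] by blast
  have sets: "splice_chain \<I> P \<subseteq> sets M"
    unfolding splice_chain_def using \<I>_sets P_sets by blast
  have "\<I> \<subseteq> sigma_sets (space M) (splice_chain \<I> P)"
    using splice_chain_sigma_sets[OF \<open>countable P\<close> \<open>{} \<in> \<I>\<close> _ _ slab cover]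
      \<I>_sets sets.sets_into_space by blast
  then have "sets M \<subseteq> sigma_sets (space M) (splice_chain \<I> P)"
    using sigma_sets_mono \<I>_generates by blast
  moreover have "sigma_sets (space M) (splice_chain \<I> P) \<subseteq> sets M"
    using sets sets.sigma_sets_subset by blast
  ultimately have "sigma_sets (space M) (splice_chain \<I> P) = sets M"
    by (rule antisym[rotated])
  with sets show "splice_chain \<I> P \<in> chain_generators M"
    unfolding chain_generators_def
    using splice_chain_chain[OF chain \<open>stacked_slabs P\<close>] endpoints[OF bottom] endpoints[OF top]
    by (intro CollectI conjI ballI) auto
  show "(C, D) \<in> P \<Longrightarrow> C \<in> splice_chain \<I> P \<and> D \<in> splice_chain \<I> P"
    by (rule endpoints)
qed

lemma splice_chain_insert:
  "splice_chain \<I> (insert (C, D) P) = {(I \<union> C) \<inter> D | I. I \<in> \<I>} \<union> splice_chain \<I> P"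
  unfolding splice_chain_def by blast

lemma splice_chain_insert_bottom:
  "splice_chain \<I> (insert ({}, D) P) = {I \<inter> D | I. I \<in> \<I>} \<union> splice_chain \<I> P"
  by (simp add: splice_chain_insert)

lemma splice_chain_insert_top:
  assumes "\<I> \<subseteq> Pow \<Omega>" and "C \<subseteq> \<Omega>"
  shows "splice_chain \<I> (insert (C, \<Omega>) P) = {I \<union> C | I. I \<in> \<I>} \<union> splice_chain \<I> P"
proof -
  have "{(I \<union> C) \<inter> \<Omega> | I. I \<in> \<I>} = {I \<union> C | I. I \<in> \<I>}"
    using assms by (auto simp: Int_absorb2)
  then show ?thesis
    by (simp add: splice_chain_insert)
qed

lemma splice_chain_range:
  "splice_chain \<I> (range (\<lambda>n. (C n, D n))) = {(I \<union> C n) \<inter> D n | I n. I \<in> \<I>}"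
  unfolding splice_chain_def by blast

lemma stacked_slabs_insert:
  assumes "stacked_slabs P" and "C \<subseteq> D"
    and "\<And>C' D'. (C', D') \<in> P \<Longrightarrow> D \<subseteq> C' \<or> D' \<subseteq> C"
  shows "stacked_slabs (insert (C, D) P)"
  using assms unfolding stacked_slabs_def by fastforce

definition incseq_slabs :: "'a set \<Rightarrow> (nat \<Rightarrow> 'a set) \<Rightarrow> ('a set \<times> 'a set) set" where
  "incseq_slabs \<Omega> A = insert ({}, A 0) (insert (\<Union>n. A n, \<Omega>) (range (\<lambda>n. (A n, A (Suc n)))))"

definition decseq_slabs :: "'a set \<Rightarrow> (nat \<Rightarrow> 'a set) \<Rightarrow> ('a set \<times> 'a set) set" where
  "decseq_slabs \<Omega> A = insert ({}, \<Inter>n. A n) (insert (A 0, \<Omega>) (range (\<lambda>n. (A (Suc n), A n))))"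

lemma countable_incseq_slabs: "countable (incseq_slabs \<Omega> A)"
  unfolding incseq_slabs_def by simp

lemma countable_decseq_slabs: "countable (decseq_slabs \<Omega> A)"
  unfolding decseq_slabs_def by simp

lemma stacked_slabs_incseq:
  assumes "incseq A"
  shows "stacked_slabs (range (\<lambda>n. (A n, A (Suc n))))"
proof -
  have "A (Suc m) \<subseteq> A n" if "m < n" for m n
    using \<open>incseq A\<close> that by (simp add: incseq_def)
  then have "(A m, A (Suc m)) = (A n, A (Suc n)) \<or> A (Suc m) \<subseteq> A n \<or> A (Suc n) \<subseteq> A m" for m n
    by (cases m n rule: linorder_cases) auto
  then show ?thesis
    unfolding stacked_slabs_def using incseq_SucD[OF \<open>incseq A\<close>] by fastforce
qed

lemma stacked_slabs_decseq:
  assumes "decseq A"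
  shows "stacked_slabs (range (\<lambda>n. (A (Suc n), A n)))"
proof -
  have "A n \<subseteq> A (Suc m)" if "m < n" for m n
    using \<open>decseq A\<close> that by (simp add: decseq_def)
  then have "(A (Suc m), A m) = (A (Suc n), A n) \<or> A m \<subseteq> A (Suc n) \<or> A n \<subseteq> A (Suc m)" for m n
    by (cases m n rule: linorder_cases) auto
  then show ?thesis
    unfolding stacked_slabs_def using decseq_SucD[OF \<open>decseq A\<close>] by fastforce
qed

lemma stacked_incseq_slabs:
  assumes "incseq A" and "\<And>n. A n \<subseteq> \<Omega>"
  shows "stacked_slabs (incseq_slabs \<Omega> A)"
proof -
  have le: "A m \<subseteq> A n" if "m \<le> n" for m n
    using \<open>incseq A\<close> that by (simp add: incseq_def)
  have "stacked_slabs (insert (\<Union>n. A n, \<Omega>) (range (\<lambda>n. (A n, A (Suc n)))))"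
    by (rule stacked_slabs_insert[OF stacked_slabs_incseq[OF \<open>incseq A\<close>]]) (use assms(2) in blast)+
  then show ?thesis
    unfolding incseq_slabs_def by (rule stacked_slabs_insert) (use le in blast)+
qed

lemma stacked_decseq_slabs:
  assumes "decseq A" and "\<And>n. A n \<subseteq> \<Omega>"
  shows "stacked_slabs (decseq_slabs \<Omega> A)"
proof -
  have le: "A n \<subseteq> A m" if "m \<le> n" for m n
    using \<open>decseq A\<close> that by (simp add: decseq_def)
  have "stacked_slabs (insert (A 0, \<Omega>) (range (\<lambda>n. (A (Suc n), A n))))"
    by (rule stacked_slabs_insert[OF stacked_slabs_decseq[OF \<open>decseq A\<close>]]) (use assms(2) le in blast)+
  then show ?thesis
    unfolding decseq_slabs_def by (rule stacked_slabs_insert) blast+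
qed

lemma incseq_slabs_cover:
  assumes "incseq A"
  shows "\<Omega> \<subseteq> (\<Union>(C, D)\<in>incseq_slabs \<Omega> A. D - C)"
proof
  fix x assume "x \<in> \<Omega>"
  have "\<exists>(C, D)\<in>incseq_slabs \<Omega> A. x \<in> D - C"
  proof (cases "x \<in> (\<Union>n. A n)")
    case True
    then obtain n where x: "x \<in> disjointed A n"
      using UN_disjointed_eq[of A] by blast
    show ?thesis
    proof (cases n)
      case 0
      with x have "x \<in> A 0 - {}" by simp
      then show ?thesis unfolding incseq_slabs_def by blast
    next
      case (Suc m)
      with x have "x \<in> A (Suc m) - A m"
        by (simp add: disjointed_mono[OF \<open>incseq A\<close>])
      then show ?thesis unfolding incseq_slabs_def by blast
    qed
  next
    case False
    with \<open>x \<in> \<Omega>\<close> show ?thesis unfolding incseq_slabs_def by blast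
  qed
  then show "x \<in> (\<Union>(C, D)\<in>incseq_slabs \<Omega> A. D - C)" by blast
qed

lemma decseq_slabs_cover:
  assumes "decseq A"
  shows "\<Omega> \<subseteq> (\<Union>(C, D)\<in>decseq_slabs \<Omega> A. D - C)"
proof
  fix x assume "x \<in> \<Omega>"
  have "\<exists>(C, D)\<in>decseq_slabs \<Omega> A. x \<in> D - C"
  proof (cases "x \<in> (\<Inter>n. A n)")
    case True
    then show ?thesis unfolding decseq_slabs_def by blast
  next
    case False
    have "incseq (\<lambda>n. - A n)"
      using \<open>decseq A\<close> by (simp add: incseq_def decseq_def)
    from False have "x \<in> (\<Union>n. - A n)"
      by blast
    then obtain n where x: "x \<in> disjointed (\<lambda>n. - A n) n"
      using UN_disjointed_eq[of "\<lambda>n. - A n"] by blast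
    show ?thesis
    proof (cases n)
      case 0
      with x \<open>x \<in> \<Omega>\<close> have "x \<in> \<Omega> - A 0" by simp
      then show ?thesis unfolding decseq_slabs_def by blast
    next
      case (Suc m)
      with x have "x \<in> A m - A (Suc m)"
        by (simp add: disjointed_mono[OF \<open>incseq (\<lambda>n. - A n)\<close>])
      then show ?thesis unfolding decseq_slabs_def by blast
    qed
  qed
  then show "x \<in> (\<Union>(C, D)\<in>decseq_slabs \<Omega> A. D - C)" by blast
qed

lemma splice_chain_incseq_slabs:
  assumes "\<I> \<subseteq> Pow \<Omega>" and "\<And>n. A n \<subseteq> \<Omega>"
  shows "splice_chain \<I> (incseq_slabs \<Omega> A) =
    {I \<inter> A 0 | I. I \<in> \<I>} \<union> {(I \<union> A n) \<inter> A (Suc n) | I n. I \<in> \<I>}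
      \<union> {I \<union> (\<Union>n. A n) | I. I \<in> \<I>}"
proof -
  have "(\<Union>n. A n) \<subseteq> \<Omega>"
    using assms(2) by blast
  then show ?thesis
    unfolding incseq_slabs_def
    by (simp add: splice_chain_insert_bottom splice_chain_insert_top[OF assms(1)]
        splice_chain_range Un_ac)
qed

lemma splice_chain_decseq_slabs:
  assumes "\<I> \<subseteq> Pow \<Omega>" and "A 0 \<subseteq> \<Omega>"
  shows "splice_chain \<I> (decseq_slabs \<Omega> A) =
    {I \<inter> (\<Inter>n. A n) | I. I \<in> \<I>} \<union> {(I \<union> A (Suc n)) \<inter> A n | I n. I \<in> \<I>}
      \<union> {I \<union> A 0 | I. I \<in> \<I>}"
  unfolding decseq_slabs_def
  by (simp add: splice_chain_insert_bottom splice_chain_insert_top[OF assms] splice_chain_range Un_ac)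

lemma splice_chain_incseq_slabs_in_chain_generators:
  assumes "\<I> \<in> chain_generators M" and A: "\<And>n. A n \<in> sets M" and "incseq A"
  defines "\<I>A \<equiv> splice_chain \<I> (incseq_slabs (space M) A)"
  shows "(\<forall>n. A n \<in> \<I>A) \<and> (\<Union>n. A n) \<in> \<I>A \<and> \<I>A \<in> chain_generators M"
proof -
  have P_sets: "incseq_slabs (space M) A \<subseteq> sets M \<times> sets M"
    using A unfolding incseq_slabs_def by auto
  have "({}, A 0) \<in> incseq_slabs (space M) A" and top: "(\<Union>n. A n, space M) \<in> incseq_slabs (space M) A"
    and slab: "(A n, A (Suc n)) \<in> incseq_slabs (space M) A" for n
    unfolding incseq_slabs_def by simp_all
  note splice = splice_chain_in_chain_generators[OF assms(1) countable_incseq_slabs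
      stacked_incseq_slabs[OF \<open>incseq A\<close> sets.sets_into_space[OF A]] P_sets
      \<open>({}, A 0) \<in> incseq_slabs (space M) A\<close> top incseq_slabs_cover[OF \<open>incseq A\<close>]]
  show ?thesis
    unfolding \<I>A_def using splice(1) splice(2)[OF slab] splice(2)[OF top] by blast
qed

lemma splice_chain_decseq_slabs_in_chain_generators:
  assumes "\<I> \<in> chain_generators M" and A: "\<And>n. A n \<in> sets M" and "decseq A"
  defines "\<I>A \<equiv> splice_chain \<I> (decseq_slabs (space M) A)"
  shows "(\<forall>n. A n \<in> \<I>A) \<and> (\<Inter>n. A n) \<in> \<I>A \<and> \<I>A \<in> chain_generators M"
proof -
  have P_sets: "decseq_slabs (space M) A \<subseteq> sets M \<times> sets M"
    using A unfolding decseq_slabs_def by auto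
  have bottom: "({}, \<Inter>n. A n) \<in> decseq_slabs (space M) A" and "(A 0, space M) \<in> decseq_slabs (space M) A"
    and slab: "(A (Suc n), A n) \<in> decseq_slabs (space M) A" for n
    unfolding decseq_slabs_def by simp_all
  note splice = splice_chain_in_chain_generators[OF assms(1) countable_decseq_slabs
      stacked_decseq_slabs[OF \<open>decseq A\<close> sets.sets_into_space[OF A]] P_sets
      bottom \<open>(A 0, space M) \<in> decseq_slabs (space M) A\<close> decseq_slabs_cover[OF \<open>decseq A\<close>]]
  show ?thesis
    unfolding \<I>A_def using splice(1) splice(2)[OF slab] splice(2)[OF bottom] by blast
qed

theorem lemma5:
  fixes M :: "'a measure" and \<I> :: "'a set set" and A :: "nat \<Rightarrow> 'a set"
  assumes "\<I> \<in> chain_generators M"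
    and "\<And>n. A n \<in> sets M"
  shows "(incseq A \<longrightarrow>
           (let \<I>A = {I \<inter> A 0 | I. I \<in> \<I>}
                    \<union> {(I \<union> A n) \<inter> A (Suc n) | I n. I \<in> \<I>}
                    \<union> {I \<union> (\<Union>n. A n) | I. I \<in> \<I>}
            in (\<forall>n. A n \<in> \<I>A) \<and> (\<Union>n. A n) \<in> \<I>A \<and> \<I>A \<in> chain_generators M)) \<and>
         (decseq A \<longrightarrow>
           (let \<I>A = {I \<inter> (\<Inter>n. A n) | I. I \<in> \<I>}
                    \<union> {(I \<union> A (Suc n)) \<inter> A n | I n. I \<in> \<I>}
                    \<union> {I \<union> A 0 | I. I \<in> \<I>}
            in (\<forall>n. A n \<in> \<I>A) \<and> (\<Inter>n. A n) \<in> \<I>A \<and> \<I>A \<in> chain_generators M))"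
proof -
  have \<I>_space: "\<I> \<subseteq> Pow (space M)"
    using assms(1) sets.sets_into_space unfolding chain_generators_def by blast
  have A_space: "A n \<subseteq> space M" for n
    using assms(2) sets.sets_into_space by blast
  show ?thesis
    unfolding Let_def
      splice_chain_incseq_slabs[of \<I> "space M" A, OF \<I>_space A_space, symmetric]
      splice_chain_decseq_slabs[of \<I> "space M" A, OF \<I>_space A_space, symmetric]
    using splice_chain_incseq_slabs_in_chain_generators[of \<I> M A, OF assms]
      splice_chain_decseq_slabs_in_chain_generators[of \<I> M A, OF assms]
    by blast
qed

end
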